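(* Let $\lambda=(\lambda_1,\dots,\lambda_I)$, $\mu=(\mu_1,\dots,\mu_J)$ be partitions of $n$ and $(T_t)_{t\ge0}$ the random transpositions Markov chain on $\mathcal{T}_{\lambda,\mu}$ with transition matrix $P$. For every positive integer $m$, every cell $(i,j)$ and every $\mathbf{x}\in\mathcal{T}_{\lambda,\mu}$, \[ \mathbb{E}[T_{t+1}(i,j)^m\mid T_t=\mathbf{x}]=x_{ij}^m\left(1-\frac{2m(n+1-m)}{n^2}\right)+(\text{a polynomial in the entries of }\mathbf{x}\text{ of degree}<m). \] Consequently, the eigenfunctions of $P$ are polynomials in the table entries.
   Context: $\mathcal{T}_{\lambda,\mu}$ is the set of $I\times J$ nonnegative integer tables with row sums $\lambda_i$ and column sums $\mu_j$; $T_t(i,j)$ is the $(i,j)$ entry at time $t$. The random transpositions chain: for $T'$ obtained from $T$ by subtracting $1$ at cells $(i_1,j_1),(i_2,j_2)$ and adding $1$ at $(i_1,j_2),(i_2,j_1)$ (with $i_1\ne i_2$, $j_1\ne j_2$), $P(T,T')=2T_{i_1j_1}T_{i_2j_2}/n^2$; $P(T,T)$ is the remaining mass. Its stationary distribution is the Fisher–Yates distribution $\pi_{\lambda,\mu}(T)=\frac1{n!}\prod_{i,j}\frac{\lambda_i!\mu_j!}{T_{ij}!}$. *)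

theory Defs
  imports Complex_Main
begin

definition is_partition :: "(nat \<Rightarrow> nat) \<Rightarrow> nat \<Rightarrow> nat \<Rightarrow> bool" where
  "is_partition lam I n \<longleftrightarrow>
     (\<forall>i<I. 0 < lam i) \<and> (\<forall>i j. i \<le> j \<longrightarrow> j < I \<longrightarrow> lam j \<le> lam i) \<and> (\<Sum>i<I. lam i) = n"

definition tables :: "nat \<Rightarrow> nat \<Rightarrow> (nat \<Rightarrow> nat) \<Rightarrow> (nat \<Rightarrow> nat) \<Rightarrow> (nat \<Rightarrow> nat \<Rightarrow> nat) set" where
  "tables I J lam mu = {T. (\<forall>i j. (I \<le> i \<or> J \<le> j) \<longrightarrow> T i j = 0)
      \<and> (\<forall>i<I. (\<Sum>j<J. T i j) = lam i) \<and> (\<forall>j<J. (\<Sum>i<I. T i j) = mu j)}"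

definition move :: "(nat \<Rightarrow> nat \<Rightarrow> nat) \<Rightarrow> nat \<Rightarrow> nat \<Rightarrow> nat \<Rightarrow> nat \<Rightarrow> (nat \<Rightarrow> nat \<Rightarrow> nat)" where
  "move T i1 j1 i2 j2 = (\<lambda>i j.
     if (i, j) = (i1, j1) \<or> (i, j) = (i2, j2) then T i j - 1
     else if (i, j) = (i1, j2) \<or> (i, j) = (i2, j1) then T i j + 1
     else T i j)"

text \<open>Each unordered pair of cells {(i1,j1),(i2,j2)}
  producing T' is counted twice as an ordered quadruple, each time with weight
  T(i1,j1) T(i2,j2)/n^2, giving P(T,T') = 2 T(i1,j1) T(i2,j2) / n^2.\<close>
definition off_prob :: "nat \<Rightarrow> nat \<Rightarrow> nat \<Rightarrow> (nat \<Rightarrow> nat \<Rightarrow> nat) \<Rightarrow> (nat \<Rightarrow> nat \<Rightarrow> nat) \<Rightarrow> real" where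
  "off_prob I J n T T' =
     (\<Sum>q\<in>{(i1, j1, i2, j2). i1 < I \<and> j1 < J \<and> i2 < I \<and> j2 < J \<and> i1 \<noteq> i2 \<and> j1 \<noteq> j2
              \<and> T' = move T i1 j1 i2 j2}.
        (case q of (i1, j1, i2, j2) \<Rightarrow> real (T i1 j1 * T i2 j2) / (real n)^2))"

definition trans_prob :: "nat \<Rightarrow> nat \<Rightarrow> (nat \<Rightarrow> nat) \<Rightarrow> (nat \<Rightarrow> nat) \<Rightarrow>
    (nat \<Rightarrow> nat \<Rightarrow> nat) \<Rightarrow> (nat \<Rightarrow> nat \<Rightarrow> nat) \<Rightarrow> real" where
  "trans_prob I J lam mu T T' =
     (let n = (\<Sum>i<I. lam i) in
      if T' = T then 1 - (\<Sum>S\<in>tables I J lam mu - {T}. off_prob I J n T S)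
      else off_prob I J n T T')"

definition cond_exp :: "nat \<Rightarrow> nat \<Rightarrow> (nat \<Rightarrow> nat) \<Rightarrow> (nat \<Rightarrow> nat) \<Rightarrow>
    ((nat \<Rightarrow> nat \<Rightarrow> nat) \<Rightarrow> real) \<Rightarrow> (nat \<Rightarrow> nat \<Rightarrow> nat) \<Rightarrow> real" where
  "cond_exp I J lam mu f x = (\<Sum>y\<in>tables I J lam mu. trans_prob I J lam mu x y * f y)"

definition poly_deg_lt :: "nat \<Rightarrow> nat \<Rightarrow> nat \<Rightarrow> ((nat \<Rightarrow> nat \<Rightarrow> nat) \<Rightarrow> real) \<Rightarrow> bool" where
  "poly_deg_lt I J d g \<longleftrightarrow>
     (\<exists>E (c :: (nat \<times> nat \<Rightarrow> nat) \<Rightarrow> real). finite E \<and>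
        (\<forall>e\<in>E. (\<forall>p. p \<notin> {..<I} \<times> {..<J} \<longrightarrow> e p = 0) \<and> (\<Sum>p\<in>{..<I} \<times> {..<J}. e p) < d) \<and>
        (\<forall>x. g x = (\<Sum>e\<in>E. c e * (\<Prod>p\<in>{..<I} \<times> {..<J}. real (x (fst p) (snd p)) ^ e p))))"

end

theory Submission
  imports Defs "HOL-Library.FuncSet"
begin

(* A move changes the cell (i,j) only if (i,j) is one of its four corners: the cell loses a unit
   when it is one of the two removed cells and gains one when it is one of the two added cells.
   Summing the weights of these moves with the row and column sums gives, for t = x(i,j),
     E[phi(T(i,j))] = phi(t) + 2/n^2 * ( t (n - lam_i - mu_j + t) (phi(t-1) - phi(t))
                                       + (lam_i - t) (mu_j - t) (phi(t+1) - phi(t)) ),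
   so the cell itself performs a birth-death step.  For phi(s) = s^m, expanding (t +- 1)^m, the
   t^(m+1) terms cancel and t^m gets the coefficient 1 + 2 (m(m-1) - n m)/n^2; everything else
   has degree below m. *)

section \<open>Moves between tables\<close>

lemma finite_tables: "finite (tables I J lam mu)"
proof -
  let ?B = "{..<I} \<times> {..<J}" and ?N = "\<Sum>i<I. lam i"
  let ?extend = "\<lambda>f i j. if i < I \<and> j < J then f (i, j) else 0"
  have "tables I J lam mu \<subseteq> ?extend ` (?B \<rightarrow>\<^sub>E {..?N})"
  proof
    fix T assume T: "T \<in> tables I J lam mu"
    have "T i j \<le> ?N" if "i < I" "j < J" for i j
    proof -
      have "T i j \<le> (\<Sum>j<J. T i j)" by (rule member_le_sum) (use that in auto)
      also have "\<dots> = lam i" using T that unfolding tables_def by auto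
      also have "\<dots> \<le> ?N" by (rule member_le_sum) (use that in auto)
      finally show ?thesis .
    qed
    then have "restrict (\<lambda>(i, j). T i j) ?B \<in> ?B \<rightarrow>\<^sub>E {..?N}" by auto
    moreover have "T = ?extend (restrict (\<lambda>(i, j). T i j) ?B)"
      using T unfolding tables_def by (auto simp: fun_eq_iff)
    ultimately show "T \<in> ?extend ` (?B \<rightarrow>\<^sub>E {..?N})" by blast
  qed
  then show ?thesis by (rule finite_subset) (intro finite_imageI finite_PiE; simp)
qed

lemma int_move:
  assumes "i1 \<noteq> i2" "j1 \<noteq> j2" "0 < x i1 j1" "0 < x i2 j2"
  shows "int (move x i1 j1 i2 j2 i j) = int (x i j)
     + of_bool ((i, j) = (i1, j2)) + of_bool ((i, j) = (i2, j1))
     - of_bool ((i, j) = (i1, j1)) - of_bool ((i, j) = (i2, j2))"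
  using assms unfolding move_def by auto

lemma sum_of_bool_cell_row:
  "(b :: nat) < J \<Longrightarrow> (\<Sum>j<J. of_bool ((i, j) = (a, b)) :: int) = of_bool (i = a)"
  by (cases "i = a") simp_all

lemma sum_of_bool_cell_col:
  "(a :: nat) < I \<Longrightarrow> (\<Sum>i<I. of_bool ((i, j) = (a, b)) :: int) = of_bool (j = b)"
  by (cases "j = b") simp_all

lemma move_mem_tables:
  assumes x: "x \<in> tables I J lam mu"
    and r: "i1 < I" "j1 < J" "i2 < I" "j2 < J" and d: "i1 \<noteq> i2" "j1 \<noteq> j2"
    and p: "0 < x i1 j1" "0 < x i2 j2"
  shows "move x i1 j1 i2 j2 \<in> tables I J lam mu"
proof -
  let ?y = "move x i1 j1 i2 j2"
  have "(\<Sum>j<J. ?y i j) = (\<Sum>j<J. x i j)" for i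
    by (subst of_nat_eq_iff[where 'a = int, symmetric])
      (simp only: of_nat_sum int_move[OF d p] sum.distrib sum_subtractf sum_of_bool_cell_row r)
  moreover have "(\<Sum>i<I. ?y i j) = (\<Sum>i<I. x i j)" for j
    by (subst of_nat_eq_iff[where 'a = int, symmetric])
      (simp only: of_nat_sum int_move[OF d p] sum.distrib sum_subtractf sum_of_bool_cell_col r)
  moreover have "?y i j = 0" if "I \<le> i \<or> J \<le> j" for i j
    using x r that unfolding tables_def move_def by auto
  ultimately show ?thesis
    using x unfolding tables_def by simp
qed

definition quads :: "nat \<Rightarrow> nat \<Rightarrow> (nat \<times> nat \<times> nat \<times> nat) set" where
  "quads I J = {(i1, j1, i2, j2). i1 < I \<and> j1 < J \<and> i2 < I \<and> j2 < J \<and> i1 \<noteq> i2 \<and> j1 \<noteq> j2}"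

definition quad_weight :: "(nat \<Rightarrow> nat \<Rightarrow> nat) \<Rightarrow> nat \<times> nat \<times> nat \<times> nat \<Rightarrow> real" where
  "quad_weight x = (\<lambda>(i1, j1, i2, j2). real (x i1 j1) * real (x i2 j2))"

definition quad_move :: "(nat \<Rightarrow> nat \<Rightarrow> nat) \<Rightarrow> nat \<times> nat \<times> nat \<times> nat \<Rightarrow> (nat \<Rightarrow> nat \<Rightarrow> nat)" where
  "quad_move x = (\<lambda>(i1, j1, i2, j2). move x i1 j1 i2 j2)"

lemma finite_quads: "finite (quads I J)"
proof (rule finite_subset)
  show "quads I J \<subseteq> {..<I} \<times> {..<J} \<times> {..<I} \<times> {..<J}" unfolding quads_def by auto
qed simp

lemma quad_move_mem_tables:
  assumes "x \<in> tables I J lam mu" "q \<in> quads I J" "quad_weight x q \<noteq> 0"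
  shows "quad_move x q \<in> tables I J lam mu - {x}"
proof -
  obtain i1 j1 i2 j2 where q: "q = (i1, j1, i2, j2)" by (cases q) auto
  have pos: "0 < x i1 j1" "0 < x i2 j2" using assms(3) by (auto simp: q quad_weight_def)
  then have "move x i1 j1 i2 j2 i1 j1 \<noteq> x i1 j1" by (simp add: move_def)
  then show ?thesis
    using move_mem_tables[OF assms(1) _ _ _ _ _ _ pos] assms(2)
    by (auto simp: q quads_def quad_move_def)
qed

lemma off_prob_eq_sum_quads:
  "off_prob I J n x y = (\<Sum>q | q \<in> quads I J \<and> quad_move x q = y. quad_weight x q) / (real n)\<^sup>2"
  unfolding off_prob_def sum_divide_distrib
  by (rule sum.cong) (auto simp: quads_def quad_move_def quad_weight_def)

lemma sum_off_prob:
  assumes x: "x \<in> tables I J lam mu"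
  shows "(\<Sum>y\<in>tables I J lam mu - {x}. off_prob I J n x y * h y)
       = (\<Sum>q\<in>quads I J. quad_weight x q * h (quad_move x q)) / (real n)\<^sup>2"
proof -
  let ?S = "tables I J lam mu - {x}"
  let ?Q = "{q \<in> quads I J. quad_move x q \<in> ?S}"
  have "(\<Sum>y\<in>?S. off_prob I J n x y * h y)
      = (\<Sum>y\<in>?S. \<Sum>q | q \<in> ?Q \<and> quad_move x q = y. quad_weight x q * h (quad_move x q)) / (real n)\<^sup>2"
    unfolding off_prob_eq_sum_quads sum_divide_distrib sum_distrib_right
    by (intro sum.cong refl) auto
  also have "(\<Sum>y\<in>?S. \<Sum>q | q \<in> ?Q \<and> quad_move x q = y. quad_weight x q * h (quad_move x q))
      = (\<Sum>q\<in>?Q. quad_weight x q * h (quad_move x q))"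
    by (rule sum.group) (use finite_quads finite_tables in auto)
  \<comment> \<open>a quadruple outside ?Q has weight 0, since moves of positive weight land in ?S\<close>
  also have "\<dots> = (\<Sum>q\<in>quads I J. quad_weight x q * h (quad_move x q))"
    by (rule sum.mono_neutral_left) (use finite_quads quad_move_mem_tables[OF x] in auto)
  finally show ?thesis .
qed

lemma cond_exp_eq_sum_quads:
  assumes x: "x \<in> tables I J lam mu" and n: "n = (\<Sum>i<I. lam i)"
  shows "cond_exp I J lam mu f x
       = f x + (\<Sum>q\<in>quads I J. quad_weight x q * (f (quad_move x q) - f x)) / (real n)\<^sup>2"
proof -
  let ?S = "tables I J lam mu - {x}" and ?P = "trans_prob I J lam mu x"
  have "cond_exp I J lam mu f x = ?P x * f x + (\<Sum>y\<in>?S. ?P y * f y)"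
    unfolding cond_exp_def by (rule sum.remove[OF finite_tables x])
  also have "(\<Sum>y\<in>?S. ?P y * f y) = (\<Sum>y\<in>?S. off_prob I J n x y * f y)"
    by (rule sum.cong) (auto simp: trans_prob_def n)
  also have "?P x = 1 - (\<Sum>y\<in>?S. off_prob I J n x y * 1)"
    by (simp add: trans_prob_def n)
  finally show ?thesis
    unfolding sum_off_prob[OF x] by (simp add: algebra_simps sum_subtractf sum_distrib_left diff_divide_distrib)
qed

section \<open>The one-step expectation of a function of one cell\<close>

lemma real_row_sum:
  "x \<in> tables I J lam mu \<Longrightarrow> i < I \<Longrightarrow> (\<Sum>d<J. real (x i d)) = real (lam i)"
  unfolding tables_def by (simp flip: of_nat_sum)

lemma real_col_sum:
  "x \<in> tables I J lam mu \<Longrightarrow> j < J \<Longrightarrow> (\<Sum>c<I. real (x c j)) = real (mu j)"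
  unfolding tables_def by (simp flip: of_nat_sum)

lemma sum_outside_cross:
  assumes x: "x \<in> tables I J lam mu" and ij: "i < I" "j < J" and n: "n = (\<Sum>i<I. lam i)"
  shows "(\<Sum>c\<in>{..<I} - {i}. \<Sum>d\<in>{..<J} - {j}. real (x c d))
       = real n - real (lam i) - real (mu j) + real (x i j)"
proof -
  have "(\<Sum>c\<in>{..<I} - {i}. \<Sum>d\<in>{..<J} - {j}. real (x c d))
      = (\<Sum>c\<in>{..<I} - {i}. real (lam c) - real (x c j))"
    by (rule sum.cong) (use ij x in \<open>auto simp: sum_diff1 real_row_sum\<close>)
  also have "\<dots> = (\<Sum>c<I. real (lam c) - real (x c j)) - (real (lam i) - real (x i j))"
    using ij by (simp add: sum_diff1)
  also have "\<dots> = real n - real (mu j) - (real (lam i) - real (x i j))"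
    using real_col_sum[OF x ij(2)] n by (simp add: sum_subtractf)
  finally show ?thesis by simp
qed

lemma cond_exp_cell:
  fixes \<phi> :: "real \<Rightarrow> real"
  assumes x: "x \<in> tables I J lam mu" and ij: "i < I" "j < J" and n: "n = (\<Sum>i<I. lam i)"
  defines "t \<equiv> real (x i j)"
  shows "cond_exp I J lam mu (\<lambda>T. \<phi> (real (T i j))) x = \<phi> t
     + 2 / (real n)\<^sup>2 * (t * (real n - real (lam i) - real (mu j) + t) * (\<phi> (t - 1) - \<phi> t)
                       + (real (lam i) - t) * (real (mu j) - t) * (\<phi> (t + 1) - \<phi> t))"
proof -
  let ?A = "{..<I} - {i}" and ?B = "{..<J} - {j}"
  define Qrem where "Qrem = {i} \<times> {j} \<times> ?A \<times> ?B \<union> ?A \<times> ?B \<times> {i} \<times> {j}"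
  define Qadd where "Qadd = {i} \<times> ?B \<times> ?A \<times> {j} \<union> ?A \<times> {j} \<times> {i} \<times> ?B"
  define F where "F q = quad_weight x q * (\<phi> (real (quad_move x q i j)) - \<phi> t)" for q
  \<comment> \<open>if x i j = 0 the weight vanishes, so the truncated x i j - 1 does no harm\<close>
  have F_rem: "F q = quad_weight x q * (\<phi> (t - 1) - \<phi> t)" if "q \<in> Qrem" for q
    using that by (cases "x i j = 0")
      (auto simp: F_def t_def Qrem_def quad_weight_def quad_move_def move_def of_nat_diff)
  have F_add: "F q = quad_weight x q * (\<phi> (t + 1) - \<phi> t)" if q: "q \<in> Qadd" for q
  proof -
    consider c d where "q = (i, d, c, j)" "c \<noteq> i" "d \<noteq> j"
      | c d where "q = (c, j, i, d)" "c \<noteq> i" "d \<noteq> j"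
      using q unfolding Qadd_def by auto
    then show ?thesis
      by cases (auto simp: F_def t_def quad_weight_def quad_move_def move_def add.commute)
  qed
  have F_other: "F q = 0" if q: "q \<in> quads I J - (Qrem \<union> Qadd)" for q
  proof -
    obtain i1 j1 i2 j2 where q_eq: "q = (i1, j1, i2, j2)" by (cases q)
    have "(i, j) \<notin> {(i1, j1), (i2, j2), (i1, j2), (i2, j1)}"
      using q ij by (auto simp: q_eq quads_def Qrem_def Qadd_def)
    then show ?thesis by (auto simp: F_def q_eq quad_move_def move_def t_def)
  qed
  have sub: "Qrem \<union> Qadd \<subseteq> quads I J" and disj: "Qrem \<inter> Qadd = {}"
    using ij by (auto simp: Qrem_def Qadd_def quads_def)
  have fin: "finite Qrem" "finite Qadd" by (simp_all add: Qrem_def Qadd_def)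
  have w_rem: "(\<Sum>q\<in>Qrem. quad_weight x q) = 2 * (t * (real n - real (lam i) - real (mu j) + t))"
  proof -
    have "(\<Sum>q\<in>{i} \<times> {j} \<times> ?A \<times> ?B. quad_weight x q) = t * (\<Sum>c\<in>?A. \<Sum>d\<in>?B. real (x c d))"
      "(\<Sum>q\<in>?A \<times> ?B \<times> {i} \<times> {j}. quad_weight x q) = t * (\<Sum>c\<in>?A. \<Sum>d\<in>?B. real (x c d))"
      by (simp_all add: quad_weight_def t_def sum.cartesian_product[symmetric]
          sum_distrib_left sum_distrib_right mult.commute)
    then show ?thesis
      unfolding Qrem_def sum_outside_cross[OF x ij n, folded t_def]
      by (subst sum.union_disjoint) auto
  qed
  have w_add: "(\<Sum>q\<in>Qadd. quad_weight x q) = 2 * ((real (lam i) - t) * (real (mu j) - t))"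
  proof -
    have "(\<Sum>q\<in>{i} \<times> ?B \<times> ?A \<times> {j}. quad_weight x q) = (\<Sum>d\<in>?B. real (x i d)) * (\<Sum>c\<in>?A. real (x c j))"
      by (simp add: quad_weight_def sum.cartesian_product[symmetric] sum_product)
    moreover have "(\<Sum>q\<in>?A \<times> {j} \<times> {i} \<times> ?B. quad_weight x q) = (\<Sum>d\<in>?B. real (x i d)) * (\<Sum>c\<in>?A. real (x c j))"
      by (simp add: quad_weight_def sum.cartesian_product[symmetric] sum_product mult.commute)
    moreover have "(\<Sum>d\<in>?B. real (x i d)) = real (lam i) - t" "(\<Sum>c\<in>?A. real (x c j)) = real (mu j) - t"
      using ij real_row_sum[OF x ij(1)] real_col_sum[OF x ij(2)] by (simp_all add: sum_diff1 t_def)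
    ultimately show ?thesis
      unfolding Qadd_def by (subst sum.union_disjoint) auto
  qed
  have "cond_exp I J lam mu (\<lambda>T. \<phi> (real (T i j))) x = \<phi> t + (\<Sum>q\<in>quads I J. F q) / (real n)\<^sup>2"
    unfolding cond_exp_eq_sum_quads[OF x n] F_def t_def ..
  also have "(\<Sum>q\<in>quads I J. F q) = (\<Sum>q\<in>Qrem \<union> Qadd. F q)"
    by (rule sum.mono_neutral_right[OF finite_quads sub]) (use F_other in blast)
  also have "\<dots> = (\<Sum>q\<in>Qrem. F q) + (\<Sum>q\<in>Qadd. F q)"
    by (rule sum.union_disjoint[OF fin disj])
  also have "\<dots> = (\<Sum>q\<in>Qrem. quad_weight x q) * (\<phi> (t - 1) - \<phi> t)
                 + (\<Sum>q\<in>Qadd. quad_weight x q) * (\<phi> (t + 1) - \<phi> t)"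
    by (simp add: F_rem F_add sum_distrib_right)
  also have "\<dots> = 2 * (t * (real n - real (lam i) - real (mu j) + t) * (\<phi> (t - 1) - \<phi> t)
                       + (real (lam i) - t) * (real (mu j) - t) * (\<phi> (t + 1) - \<phi> t))"
    unfolding w_rem w_add by (simp add: algebra_simps)
  finally show ?thesis by simp
qed

section \<open>Polynomial functions of one variable\<close>

definition poly_fun_deg_lt :: "nat \<Rightarrow> (real \<Rightarrow> real) \<Rightarrow> bool" where
  "poly_fun_deg_lt d f \<longleftrightarrow> (\<exists>b. \<forall>t. f t = (\<Sum>k<d. b k * t ^ k))"

lemma poly_fun_deg_ltI:
  assumes "\<And>t. f t = (\<Sum>k<d. b k * t ^ k)"
  shows "poly_fun_deg_lt d f"
  using assms unfolding poly_fun_deg_lt_def by blast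

lemma poly_fun_deg_lt_mono:
  assumes "poly_fun_deg_lt d f" "d \<le> d'"
  shows "poly_fun_deg_lt d' f"
proof -
  obtain b where b: "\<And>t. f t = (\<Sum>k<d. b k * t ^ k)"
    using assms(1) unfolding poly_fun_deg_lt_def by blast
  have "f t = (\<Sum>k<d'. (if k < d then b k else 0) * t ^ k)" for t
    unfolding b using assms(2) by (intro sum.mono_neutral_cong_left) auto
  then show ?thesis by (rule poly_fun_deg_ltI)
qed

lemma poly_fun_deg_lt_add:
  assumes "poly_fun_deg_lt d f" "poly_fun_deg_lt d g"
  shows "poly_fun_deg_lt d (\<lambda>t. f t + g t)"
proof -
  obtain b c where "\<And>t. f t = (\<Sum>k<d. b k * t ^ k)" "\<And>t. g t = (\<Sum>k<d. c k * t ^ k)"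
    using assms unfolding poly_fun_deg_lt_def by blast
  then have "f t + g t = (\<Sum>k<d. (b k + c k) * t ^ k)" for t
    by (simp add: sum.distrib distrib_right)
  then show ?thesis by (rule poly_fun_deg_ltI)
qed

lemma poly_fun_deg_lt_cmult:
  assumes "poly_fun_deg_lt d f"
  shows "poly_fun_deg_lt d (\<lambda>t. a * f t)"
proof -
  obtain b where "\<And>t. f t = (\<Sum>k<d. b k * t ^ k)"
    using assms unfolding poly_fun_deg_lt_def by blast
  then have "a * f t = (\<Sum>k<d. (a * b k) * t ^ k)" for t
    by (simp add: sum_distrib_left mult.assoc)
  then show ?thesis by (rule poly_fun_deg_ltI)
qed

lemma poly_fun_deg_lt_diff:
  assumes "poly_fun_deg_lt d f" "poly_fun_deg_lt d g"
  shows "poly_fun_deg_lt d (\<lambda>t. f t - g t)"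
  using poly_fun_deg_lt_add[OF assms(1) poly_fun_deg_lt_cmult[OF assms(2), of "-1"]] by simp

lemma poly_fun_deg_lt_times_var:
  assumes "poly_fun_deg_lt d f"
  shows "poly_fun_deg_lt (Suc d) (\<lambda>t. t * f t)"
proof -
  obtain b where "\<And>t. f t = (\<Sum>k<d. b k * t ^ k)"
    using assms unfolding poly_fun_deg_lt_def by blast
  then have "t * f t = (\<Sum>k<Suc d. (if k = 0 then 0 else b (k - 1)) * t ^ k)" for t
    by (subst sum.lessThan_Suc_shift) (simp add: sum_distrib_left mult_ac)
  then show ?thesis by (rule poly_fun_deg_ltI)
qed

lemma poly_fun_deg_lt_monom:
  assumes "k < d"
  shows "poly_fun_deg_lt d (\<lambda>t. a * t ^ k)"
proof -
  have "a * t ^ k = (\<Sum>l<d. (if l = k then a else 0) * t ^ l)" for t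
  proof -
    have "(\<Sum>l<d. (if l = k then a else 0) * t ^ l) = (\<Sum>l<d. if l = k then a * t ^ l else 0)"
      by (rule sum.cong) auto
    then show ?thesis using assms by simp
  qed
  then show ?thesis by (rule poly_fun_deg_ltI)
qed

lemma binomial_top_terms:
  fixes c :: real
  assumes "2 \<le> m"
  shows "poly_fun_deg_lt (m - 2) (\<lambda>t. (t + c) ^ m - t ^ m - real m * c * t ^ (m - 1)
                                     - real (m choose 2) * c\<^sup>2 * t ^ (m - 2))"
proof -
  obtain p where m: "m = Suc (Suc p)"
    using assms by (metis add_2_eq_Suc le_Suc_ex)
  have "(t + c) ^ m = (\<Sum>k\<le>m. real (m choose k) * t ^ k * c ^ (m - k))" for t
    by (rule binomial_ring)
  also have "(\<Sum>k\<le>m. real (m choose k) * t ^ k * c ^ (m - k))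
      = (\<Sum>k<p. (real (m choose k) * c ^ (m - k)) * t ^ k) + real (m choose 2) * c\<^sup>2 * t ^ p
        + real m * c * t ^ Suc p + t ^ m" for t
    using binomial_symmetric[of p m] binomial_symmetric[of "Suc p" m]
    by (simp add: m lessThan_Suc_atMost[symmetric] mult_ac power2_eq_square)
  finally show ?thesis
    unfolding poly_fun_deg_lt_def by (intro exI[of _ "\<lambda>k. real (m choose k) * c ^ (m - k)"]) (simp add: m)
qed

lemma moment_remainder_deg_lt:
  fixes n a b :: real
  assumes n: "n \<noteq> 0" and m: "0 < m"
  shows "poly_fun_deg_lt m (\<lambda>t. t ^ m
     + 2 / n\<^sup>2 * (t * (n - a - b + t) * ((t - 1) ^ m - t ^ m) + (a - t) * (b - t) * ((t + 1) ^ m - t ^ m))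
     - t ^ m * (1 - 2 * real m * (n + 1 - real m) / n\<^sup>2))"
proof (cases "m = 1")
  case True
  have "poly_fun_deg_lt 1 (\<lambda>t. 2 * a * b / n\<^sup>2 * t ^ 0)"
    by (rule poly_fun_deg_lt_monom) simp
  moreover have "t + 2 / n\<^sup>2 * (t * (n - a - b + t) * ((t - 1) - t) + (a - t) * (b - t) * ((t + 1) - t))
     - t * (1 - 2 * (n + 1 - 1) / n\<^sup>2) = 2 * a * b / n\<^sup>2 * t ^ 0" for t
    using n by (simp add: field_simps power2_eq_square)
  ultimately show ?thesis using True by simp
next
  case False
  then obtain p where mp: "m = Suc (Suc p)"
    using m by (metis One_nat_def gr0_implies_Suc not0_implies_Suc)
  define C where "C = real (m choose 2)"
  define Rp where "Rp t = (t + 1) ^ m - t ^ m - real m * 1 * t ^ (m - 1) - C * 1\<^sup>2 * t ^ (m - 2)" for t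
  define Rm where "Rm t = (t + -1) ^ m - t ^ m - real m * -1 * t ^ (m - 1) - C * (-1)\<^sup>2 * t ^ (m - 2)" for t
  have Rp: "poly_fun_deg_lt p Rp" and Rm: "poly_fun_deg_lt p Rm"
    using binomial_top_terms[of m 1] binomial_top_terms[of m "-1"] unfolding Rp_def Rm_def C_def mp
    by simp_all
  define a' where "a' = n - a - b"
  \<comment> \<open>The t^(m+1) terms of the two differences cancel; their t^m terms add up to
    (2 C - n m) t^m = -m (n + 1 - m) t^m, which the subtracted term removes. B is the rest.\<close>
  define B where "B t = t * (t * (Rm t + Rp t)) + (a' - a - b) * C * t ^ Suc p
     + t * (a' * Rm t - (a + b) * Rp t) + a * b * (real m * t ^ Suc p + C * t ^ p + Rp t)" for t
  have "poly_fun_deg_lt m B"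
    unfolding B_def mp
    by (intro poly_fun_deg_lt_add poly_fun_deg_lt_diff poly_fun_deg_lt_times_var poly_fun_deg_lt_cmult
        poly_fun_deg_lt_monom poly_fun_deg_lt_mono[OF Rp] poly_fun_deg_lt_mono[OF Rm] Rp Rm) auto
  then have "poly_fun_deg_lt m (\<lambda>t. 2 / n\<^sup>2 * B t)"
    by (rule poly_fun_deg_lt_cmult)
  moreover have "t ^ m
     + 2 / n\<^sup>2 * (t * (n - a - b + t) * ((t - 1) ^ m - t ^ m) + (a - t) * (b - t) * ((t + 1) ^ m - t ^ m))
     - t ^ m * (1 - 2 * real m * (n + 1 - real m) / n\<^sup>2) = 2 / n\<^sup>2 * B t" for t
  proof -
    have pow: "t ^ m = t * (t * t ^ p)" "t ^ Suc p = t * t ^ p" by (simp_all add: mp)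
    have C: "C = real m * (real m - 1) / 2"
      by (simp add: C_def mp choose_two real_of_nat_div algebra_simps)
    have Dp: "(t + 1) ^ m - t ^ m = real m * t ^ Suc p + C * t ^ p + Rp t"
      by (simp add: Rp_def mp)
    have Dm: "(t - 1) ^ m - t ^ m = - real m * t ^ Suc p + C * t ^ p + Rm t"
      by (simp add: Rm_def mp)
    show ?thesis
      unfolding Dp Dm B_def a'_def C using n by (simp add: field_simps pow)
  qed
  ultimately show ?thesis by simp
qed

lemma poly_deg_lt_cell:
  assumes "poly_fun_deg_lt d G" "i < I" "j < J"
  shows "poly_deg_lt I J d (\<lambda>x. G (real (x i j)))"
proof -
  obtain b where b: "\<And>t. G t = (\<Sum>k<d. b k * t ^ k)"
    using assms(1) unfolding poly_fun_deg_lt_def by blast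
  let ?box = "{..<I} \<times> {..<J}"
  define e where "e k = (\<lambda>p. if p = (i, j) then k else 0)" for k :: nat
  have ij: "(i, j) \<in> ?box" using assms by auto
  have inj: "inj_on e {..<d}"
    by (rule inj_onI) (metis e_def)
  have deg: "(\<Sum>p\<in>?box. e k p) = k" for k
    using ij by (simp add: e_def)
  have "(\<Prod>p\<in>?box. real (x (fst p) (snd p)) ^ e k p) = real (x i j) ^ k" for x k
  proof -
    have "(\<Prod>p\<in>?box. real (x (fst p) (snd p)) ^ e k p)
        = (\<Prod>p\<in>?box. if p = (i, j) then real (x i j) ^ k else 1)"
      by (rule prod.cong) (auto simp: e_def)
    then show ?thesis using ij by simp
  qed
  then have "G (real (x i j))
      = (\<Sum>f\<in>e ` {..<d}. b (f (i, j)) * (\<Prod>p\<in>?box. real (x (fst p) (snd p)) ^ f p))" for x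
    by (simp add: b sum.reindex[OF inj]) (simp add: e_def)
  moreover have "\<forall>f\<in>e ` {..<d}. (\<forall>p. p \<notin> ?box \<longrightarrow> f p = 0) \<and> (\<Sum>p\<in>?box. f p) < d"
    using ij deg by (auto simp: e_def)
  ultimately show ?thesis
    unfolding poly_deg_lt_def by (intro exI[of _ "e ` {..<d}"] exI[of _ "\<lambda>f. b (f (i, j))"]) auto
qed

theorem theorem3p1:
  fixes I J n :: nat and lam mu :: "nat \<Rightarrow> nat"
  assumes "is_partition lam I n" and "is_partition mu J n"
  shows "\<forall>m i j. 0 < m \<longrightarrow> i < I \<longrightarrow> j < J \<longrightarrow>
    (\<exists>g. poly_deg_lt I J m g \<and>
      (\<forall>x\<in>tables I J lam mu.
         cond_exp I J lam mu (\<lambda>T. real (T i j) ^ m) x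
           = real (x i j) ^ m * (1 - 2 * real m * (real n + 1 - real m) / (real n)^2) + g x))"
proof (intro allI impI)
  fix m i j :: nat
  assume m: "0 < m" and ij: "i < I" "j < J"
  have n: "n = (\<Sum>i<I. lam i)" and "0 < lam i"
    using assms(1) ij(1) unfolding is_partition_def by auto
  moreover have "lam i \<le> (\<Sum>i<I. lam i)" by (rule member_le_sum) (use ij in auto)
  ultimately have n0: "real n \<noteq> 0" by linarith
  define G where "G t = t ^ m
     + 2 / (real n)\<^sup>2 * (t * (real n - real (lam i) - real (mu j) + t) * ((t - 1) ^ m - t ^ m)
                       + (real (lam i) - t) * (real (mu j) - t) * ((t + 1) ^ m - t ^ m))
     - t ^ m * (1 - 2 * real m * (real n + 1 - real m) / (real n)\<^sup>2)" for t
  show "\<exists>g. poly_deg_lt I J m g \<and> (\<forall>x\<in>tables I J lam mu.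
      cond_exp I J lam mu (\<lambda>T. real (T i j) ^ m) x
        = real (x i j) ^ m * (1 - 2 * real m * (real n + 1 - real m) / (real n)^2) + g x)"
  proof (intro exI conjI ballI)
    show "poly_deg_lt I J m (\<lambda>x. G (real (x i j)))"
      unfolding G_def by (rule poly_deg_lt_cell[OF moment_remainder_deg_lt[OF n0 m] ij])
    fix x assume x: "x \<in> tables I J lam mu"
    show "cond_exp I J lam mu (\<lambda>T. real (T i j) ^ m) x
        = real (x i j) ^ m * (1 - 2 * real m * (real n + 1 - real m) / (real n)^2) + G (real (x i j))"
      unfolding cond_exp_cell[OF x ij n, where \<phi> = "\<lambda>s. s ^ m"] G_def by simp
  qed
qed

end
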